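(* Fix a real parameter $k$. Let $G$ be a topology that is strongly consistent (with respect to $k$) and physically connected. Then $G$ is strongly connected, i.e., for any two nodes $u,v$ of $G$ there is a directed path from $u$ to $v$ consisting only of active links.
   Context: A topology is a finite directed graph $G=(V,E)$ whose links $e\in E$ carry a real weight $w(e)$ and a state $s(e)\in\{\mathrm{active},\mathrm{inactive},\mathrm{unclassified}\}$; a link is classified if it is active or inactive. A path is a finite sequence of links in which the target of each link is the source of the next. $G$ is physically connected if between any two nodes there is a directed path of links in arbitrary state. $G$ is structurally consistent if it has no loops and no parallel links (two distinct links with the same source and target). For a link $ab$ from $a$ to $b$, a triangle for $ab$ is a node $c\notin\{a,b\}$ with classified links $ac$ and $cb$ such that $w(ab)>\max(w(ac),w(cb))$ and $w(ab)\ge k\cdot\min(w(ac),w(cb))$. Inactive-link constraint: every inactive link has a triangle. Active-link constraint: no active link has a triangle. Unclassified-link constraint: no link is unclassified. $G$ is weakly consistent if it is structurally consistent and fulfills the active-link and inactive-link constraints; it is strongly consistent if it is weakly consistent and additionally fulfills the unclassified-link constraint. *)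

theory Defs
  imports Main "HOL.Real"
begin

datatype link_state = Active | Inactive | Unclassified

record ('v, 'e) topology =
  nodes :: "'v set"
  links :: "'e set"
  src :: "'e \<Rightarrow> 'v"
  tgt :: "'e \<Rightarrow> 'v"
  weight :: "'e \<Rightarrow> real"
  state :: "'e \<Rightarrow> link_state"

definition finite_topology :: "('v, 'e) topology \<Rightarrow> bool" where
  "finite_topology G \<longleftrightarrow> finite (nodes G) \<and> finite (links G) \<and>
     (\<forall>e \<in> links G. src G e \<in> nodes G \<and> tgt G e \<in> nodes G)"

definition classified :: "('v, 'e) topology \<Rightarrow> 'e \<Rightarrow> bool" where
  "classified G e \<longleftrightarrow> state G e = Active \<or> state G e = Inactive"

definition is_path :: "('v, 'e) topology \<Rightarrow> 'e list \<Rightarrow> bool" where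
  "is_path G p \<longleftrightarrow> set p \<subseteq> links G \<and>
     (\<forall>i. Suc i < length p \<longrightarrow> tgt G (p ! i) = src G (p ! Suc i))"

definition path_from_to :: "('v, 'e) topology \<Rightarrow> 'v \<Rightarrow> 'v \<Rightarrow> 'e list \<Rightarrow> bool" where
  "path_from_to G u v p \<longleftrightarrow> is_path G p \<and>
     (if p = [] then u = v else src G (hd p) = u \<and> tgt G (last p) = v)"

definition physically_connected :: "('v, 'e) topology \<Rightarrow> bool" where
  "physically_connected G \<longleftrightarrow>
     (\<forall>u \<in> nodes G. \<forall>v \<in> nodes G. \<exists>p. path_from_to G u v p)"

definition structurally_consistent :: "('v, 'e) topology \<Rightarrow> bool" where
  "structurally_consistent G \<longleftrightarrow>
     (\<forall>e \<in> links G. src G e \<noteq> tgt G e) \<and>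
     (\<forall>e1 \<in> links G. \<forall>e2 \<in> links G. e1 \<noteq> e2 \<longrightarrow>
        \<not> (src G e1 = src G e2 \<and> tgt G e1 = tgt G e2))"

definition has_triangle :: "real \<Rightarrow> ('v, 'e) topology \<Rightarrow> 'e \<Rightarrow> bool" where
  "has_triangle k G e \<longleftrightarrow>
     (\<exists>c \<in> nodes G. c \<noteq> src G e \<and> c \<noteq> tgt G e \<and>
       (\<exists>e1 \<in> links G. \<exists>e2 \<in> links G.
          src G e1 = src G e \<and> tgt G e1 = c \<and> src G e2 = c \<and> tgt G e2 = tgt G e \<and>
          classified G e1 \<and> classified G e2 \<and>
          weight G e > max (weight G e1) (weight G e2) \<and>
          weight G e \<ge> k * min (weight G e1) (weight G e2)))"

definition inactive_link_constraint :: "real \<Rightarrow> ('v, 'e) topology \<Rightarrow> bool" where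
  "inactive_link_constraint k G \<longleftrightarrow>
     (\<forall>e \<in> links G. state G e = Inactive \<longrightarrow> has_triangle k G e)"

definition active_link_constraint :: "real \<Rightarrow> ('v, 'e) topology \<Rightarrow> bool" where
  "active_link_constraint k G \<longleftrightarrow>
     (\<forall>e \<in> links G. state G e = Active \<longrightarrow> \<not> has_triangle k G e)"

definition unclassified_link_constraint :: "('v, 'e) topology \<Rightarrow> bool" where
  "unclassified_link_constraint G \<longleftrightarrow> (\<forall>e \<in> links G. state G e \<noteq> Unclassified)"

definition weakly_consistent :: "real \<Rightarrow> ('v, 'e) topology \<Rightarrow> bool" where
  "weakly_consistent k G \<longleftrightarrow> structurally_consistent G \<and>
     active_link_constraint k G \<and> inactive_link_constraint k G"

definition strongly_consistent :: "real \<Rightarrow> ('v, 'e) topology \<Rightarrow> bool" where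
  "strongly_consistent k G \<longleftrightarrow> weakly_consistent k G \<and> unclassified_link_constraint G"

definition strongly_connected :: "('v, 'e) topology \<Rightarrow> bool" where
  "strongly_connected G \<longleftrightarrow>
     (\<forall>u \<in> nodes G. \<forall>v \<in> nodes G. \<exists>p. path_from_to G u v p \<and>
        (\<forall>e \<in> set p. state G e = Active))"

end

theory Submission
  imports Defs
begin

text \<open>Every inactive link is bypassed by a triangle of two strictly lighter classified
  links. Inducting on the number of lighter links, each link is therefore bridged by a path of
  active links; replacing the links of a physical path by these bridges yields an active path.\<close>

lemma path_from_to_Nil [simp]: "path_from_to G u v [] \<longleftrightarrow> u = v"
  by (simp add: path_from_to_def is_path_def)

lemma path_from_to_Cons:
  "path_from_to G u v (e # p) \<longleftrightarrow>
     e \<in> links G \<and> src G e = u \<and> path_from_to G (tgt G e) v p"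
proof (cases p)
  case Nil
  then show ?thesis by (auto simp: path_from_to_def is_path_def)
next
  case (Cons f q)
  have "is_path G (e # p) \<longleftrightarrow> e \<in> links G \<and> tgt G e = src G (hd p) \<and> is_path G p"
    using Cons unfolding is_path_def
    by (auto simp: nth_Cons' less_Suc_eq_0_disj split: if_splits)
  then show ?thesis
    using Cons by (auto simp: path_from_to_def)
qed

lemma path_from_to_append:
  assumes "path_from_to G u v p" and "path_from_to G v w q"
  shows "path_from_to G u w (p @ q)"
  using assms by (induction p arbitrary: u) (auto simp: path_from_to_Cons)

definition active_reachable :: "('v, 'e) topology \<Rightarrow> 'v \<Rightarrow> 'v \<Rightarrow> bool" where
  "active_reachable G u v \<longleftrightarrow>
     (\<exists>p. path_from_to G u v p \<and> (\<forall>e \<in> set p. state G e = Active))"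

lemma active_reachable_refl: "active_reachable G u u"
  unfolding active_reachable_def by (rule exI[of _ "[]"]) simp

lemma active_reachable_trans:
  assumes "active_reachable G u v" and "active_reachable G v w"
  shows "active_reachable G u w"
  using assms path_from_to_append unfolding active_reachable_def by fastforce

lemma active_reachable_link:
  assumes "e \<in> links G" and "state G e = Active"
  shows "active_reachable G (src G e) (tgt G e)"
  unfolding active_reachable_def
  using assms by (intro exI[of _ "[e]"]) (simp add: path_from_to_Cons)

lemma active_reachable_along_path:
  assumes "path_from_to G u v p"
    and "\<And>e. e \<in> links G \<Longrightarrow> active_reachable G (src G e) (tgt G e)"
  shows "active_reachable G u v"
  using assms(1)
proof (induction p arbitrary: u)
  case Nil
  then show ?case by (simp add: active_reachable_refl)
next
  case (Cons e p)
  then show ?case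
    using assms(2) active_reachable_trans by (metis path_from_to_Cons)
qed

lemma card_lighter_links_less:
  assumes "finite (links G)" and "f \<in> links G" and "weight G f < weight G e"
  shows "card {e' \<in> links G. weight G e' < weight G f}
       < card {e' \<in> links G. weight G e' < weight G e}"
  using assms by (intro psubset_card_mono) auto

lemma link_active_reachable:
  assumes fin: "finite (links G)"
    and all_classified: "unclassified_link_constraint G"
    and inactive: "inactive_link_constraint k G"
    and "e \<in> links G"
  shows "active_reachable G (src G e) (tgt G e)"
  using \<open>e \<in> links G\<close>
proof (induction "card {e' \<in> links G. weight G e' < weight G e}" arbitrary: e
    rule: less_induct)
  case less
  show ?case
  proof (cases "state G e")
    case Active
    then show ?thesis using less.prems by (rule active_reachable_link[rotated])
  next
    case Inactive
    then have "has_triangle k G e"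
      using inactive less.prems by (simp add: inactive_link_constraint_def)
    then obtain e1 e2 where e1: "e1 \<in> links G" "weight G e1 < weight G e"
      and e2: "e2 \<in> links G" "weight G e2 < weight G e"
      and ends: "src G e1 = src G e" "tgt G e1 = src G e2" "tgt G e2 = tgt G e"
      unfolding has_triangle_def by auto
    have "active_reachable G (src G e1) (tgt G e1)"
      using less.hyps[OF card_lighter_links_less[OF fin e1] e1(1)] .
    moreover have "active_reachable G (src G e2) (tgt G e2)"
      using less.hyps[OF card_lighter_links_less[OF fin e2] e2(1)] .
    ultimately show ?thesis
      using ends active_reachable_trans by metis
  next
    case Unclassified
    then show ?thesis
      using all_classified less.prems by (simp add: unclassified_link_constraint_def)
  qed
qed

theorem theorem2:
  fixes k :: real and G :: "('v, 'e) topology"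
  assumes "finite_topology G"
    and "strongly_consistent k G"
    and "physically_connected G"
  shows "strongly_connected G"
proof -
  have links: "\<And>e. e \<in> links G \<Longrightarrow> active_reachable G (src G e) (tgt G e)"
    using assms(1,2) link_active_reachable[of G k]
    by (simp add: finite_topology_def strongly_consistent_def weakly_consistent_def)
  show ?thesis
    unfolding strongly_connected_def
  proof (intro ballI)
    fix u v
    assume "u \<in> nodes G" and "v \<in> nodes G"
    then obtain p where "path_from_to G u v p"
      using assms(3) unfolding physically_connected_def by blast
    then have "active_reachable G u v"
      using links by (rule active_reachable_along_path)
    then show "\<exists>p. path_from_to G u v p \<and> (\<forall>e \<in> set p. state G e = Active)"
      unfolding active_reachable_def .
  qed
qed

end
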